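(* With the notation of the context, \[ z^+(\beta)=x_1^\uparrow(\beta)-\tfrac1\theta,\qquad z^-(\beta)=x_\theta^\downarrow(\beta)-\tfrac1\theta, \] where $z^+(\beta)=\lim_{h\downarrow0}\frac{z(\beta,h)-z(\beta,0)}{h}$ and $z^-(\beta)=\lim_{h\uparrow0}\frac{z(\beta,h)-z(\beta,0)}{h}$.
   Context: Fix $\theta\in\{2,3,\dots\}$, $\beta>0$. $\Delta=\{x\in[0,1]^\theta:x_1\ge\dots\ge x_\theta,\ \sum x_i=1\}$; for $x,y\in\Delta$, $y\trianglerighteq x$ means $\sum_{j\le i}y_j\ge\sum_{j\le i}x_j$ for all $i$. $\phi_\beta(x)=\frac\beta2\big(\sum_i x_i^2-1\big)-\sum_i x_i\log x_i$, $g_\beta(x)=\max_{y\in\Delta,\,y\trianglerighteq x}\phi_\beta(y)$, and $z(\beta,h)=\max_{x\in\Delta}\big(h(x_1-\tfrac1\theta)+g_\beta(x)\big)$ for $h\ge0$, $z(\beta,h)=\max_{x\in\Delta}\big(h(x_\theta-\tfrac1\theta)+g_\beta(x)\big)$ for $h\le0$. $x^\uparrow(\beta)\in\Delta$ is a maximizer of $\phi_\beta$ over $\Delta$ whose first coordinate is maximal among all maximizers, and $x^\downarrow(\beta)\in\Delta$ is a maximizer of $\phi_\beta$ whose last coordinate $x_\theta$ is minimal among all maximizers. *)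

theory Defs
  imports "HOL-Analysis.Analysis"
begin

text \<open>Vectors x = (x_1,...,x_theta) are functions nat => real, coordinates indexed by 1..theta,
  and set to 0 outside {1..theta}.\<close>

definition Simp :: "nat \<Rightarrow> (nat \<Rightarrow> real) set" where
  "Simp \<theta> = {x. (\<forall>i\<in>{1..\<theta>}. 0 \<le> x i \<and> x i \<le> 1)
              \<and> (\<forall>i\<in>{1..<\<theta>}. x (i+1) \<le> x i)
              \<and> (\<Sum>i=1..\<theta>. x i) = 1
              \<and> (\<forall>i. i \<notin> {1..\<theta>} \<longrightarrow> x i = 0)}"

definition majorizes :: "nat \<Rightarrow> (nat \<Rightarrow> real) \<Rightarrow> (nat \<Rightarrow> real) \<Rightarrow> bool" where
  "majorizes \<theta> y x \<longleftrightarrow> (\<forall>i\<in>{1..\<theta>}. (\<Sum>j=1..i. x j) \<le> (\<Sum>j=1..i. y j))"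

definition phi :: "nat \<Rightarrow> real \<Rightarrow> (nat \<Rightarrow> real) \<Rightarrow> real" where
  "phi \<theta> \<beta> x = \<beta> / 2 * ((\<Sum>i=1..\<theta>. (x i)\<^sup>2) - 1) - (\<Sum>i=1..\<theta>. x i * ln (x i))"

definition g :: "nat \<Rightarrow> real \<Rightarrow> (nat \<Rightarrow> real) \<Rightarrow> real" where
  "g \<theta> \<beta> x = Sup (phi \<theta> \<beta> ` {y \<in> Simp \<theta>. majorizes \<theta> y x})"

definition zf :: "nat \<Rightarrow> real \<Rightarrow> real \<Rightarrow> real" where
  "zf \<theta> \<beta> h =
     (if 0 \<le> h then Sup ((\<lambda>x. h * (x 1 - 1 / real \<theta>) + g \<theta> \<beta> x) ` Simp \<theta>)
      else Sup ((\<lambda>x. h * (x \<theta> - 1 / real \<theta>) + g \<theta> \<beta> x) ` Simp \<theta>))"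

definition is_phi_max :: "nat \<Rightarrow> real \<Rightarrow> (nat \<Rightarrow> real) \<Rightarrow> bool" where
  "is_phi_max \<theta> \<beta> x \<longleftrightarrow> x \<in> Simp \<theta> \<and> (\<forall>y\<in>Simp \<theta>. phi \<theta> \<beta> y \<le> phi \<theta> \<beta> x)"

definition is_x_up :: "nat \<Rightarrow> real \<Rightarrow> (nat \<Rightarrow> real) \<Rightarrow> bool" where
  "is_x_up \<theta> \<beta> x \<longleftrightarrow> is_phi_max \<theta> \<beta> x \<and> (\<forall>y. is_phi_max \<theta> \<beta> y \<longrightarrow> y 1 \<le> x 1)"

definition is_x_down :: "nat \<Rightarrow> real \<Rightarrow> (nat \<Rightarrow> real) \<Rightarrow> bool" where
  "is_x_down \<theta> \<beta> x \<longleftrightarrow> is_phi_max \<theta> \<beta> x \<and> (\<forall>y. is_phi_max \<theta> \<beta> y \<longrightarrow> x \<theta> \<le> y \<theta>)"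

end

theory Submission
  imports Defs "HOL-Real_Asymp.Real_Asymp"
begin

text \<open>Since \<open>y \<trianglerighteq> x\<close> forces \<open>y\<^sub>1 \<ge> x\<^sub>1\<close> and \<open>y\<^sub>\<theta> \<le> x\<^sub>\<theta>\<close>, the inner maximisation
  defining \<open>g\<^sub>\<beta>\<close> can be absorbed into the outer one: for \<open>h \<ge> 0\<close>,
  \<open>z(\<beta>,h) = max\<^sub>y (h (y\<^sub>1 - 1/\<theta>) + \<phi>\<^sub>\<beta>(y))\<close>, and similarly with \<open>y\<^sub>\<theta>\<close> for \<open>h \<le> 0\<close>.
  So \<open>z\<close> is the value function of a linear perturbation of the continuous function \<open>\<phi>\<^sub>\<beta>\<close> on
  the compact set \<open>\<Delta>\<close>, and Danskin's theorem gives its one-sided derivatives at \<open>h = 0\<close> as the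
  extreme value of the perturbing linear form over the maximisers of \<open>\<phi>\<^sub>\<beta>\<close>.\<close>

text \<open>With the library convention \<open>ln 0 = 0\<close>, the entropy term \<open>t ln t\<close> is already
  continuous at \<open>0\<close>.\<close>

lemma continuous_on_x_ln_x: "continuous_on {0..} (\<lambda>t::real. t * ln t)"
proof -
  have "continuous (at t within {0..}) (\<lambda>t::real. t * ln t)" if "0 \<le> t" for t
  proof (cases "t = 0")
    case True
    have "((\<lambda>t::real. t * ln t) \<longlongrightarrow> 0) (at_right 0)" by real_asymp
    then show ?thesis using True by (simp add: continuous_within at_within_Ici_at_right)
  next
    case False
    with that have "isCont (\<lambda>t::real. t * ln t) t" by (auto intro!: continuous_intros)
    then show ?thesis by (rule continuous_at_imp_continuous_within)
  qed
  then show ?thesis by (simp add: continuous_on_eq_continuous_within)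
qed

lemma eventually_perturbed_le_max:
  fixes S :: "'a::t2_space set" and f a :: "'a \<Rightarrow> real"
  assumes S: "compact S" and f: "continuous_on S f" and a: "continuous_on S a"
    and x0: "x0 \<in> S" and f_max: "\<forall>y\<in>S. f y \<le> f x0"
    and a_max: "\<forall>y\<in>S. f y = f x0 \<longrightarrow> a y \<le> a x0" and e: "0 < e"
  shows "\<forall>\<^sub>F h in at_right 0. \<forall>y\<in>S. h * a y + f y \<le> f x0 + h * (a x0 + e)"
proof -
  define K where "K = S \<inter> a -` {a x0 + e..}"
  have "closed K"
    unfolding K_def using continuous_closed_preimage[OF a compact_imp_closed[OF S]] by simp
  then have "compact K"
    using compact_Int_closed[OF S, of K] by (simp add: K_def Int_assoc)
  obtain C where C: "\<forall>y\<in>S. a y \<le> C"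
    using compact_attains_sup[OF compact_continuous_image[OF a S]] x0 by fastforce
  show ?thesis
  proof (cases "K = {}")
    case True
    have "h * a y + f y \<le> f x0 + h * (a x0 + e)" if "0 < h" "y \<in> S" for h y
    proof -
      have "a y \<le> a x0 + e" using True that(2) by (auto simp: K_def)
      then have "h * a y \<le> h * (a x0 + e)" using that by (intro mult_left_mono) auto
      with f_max that(2) show ?thesis by fastforce
    qed
    then show ?thesis using eventually_at_right_less[of 0] by (auto elim!: eventually_mono)
  next
    case False
    obtain y0 where y0: "y0 \<in> K" "\<forall>y\<in>K. f y \<le> f y0"
      using continuous_attains_sup[OF \<open>compact K\<close> False continuous_on_subset[OF f]] by (auto simp: K_def)
    \<comment> \<open>on the maximisers of \<open>f\<close> we have \<open>a \<le> a x0\<close>, so none of them lies in \<open>K\<close>\<close>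
    have gap: "f y0 < f x0"
      using y0 f_max a_max e by (force simp: K_def)
    define d where "d = (f x0 - f y0) / (\<bar>C - a x0 - e\<bar> + 1)"
    have "0 < d" using gap by (simp add: d_def)
    have "h * a y + f y \<le> f x0 + h * (a x0 + e)" if h: "0 < h" "h < d" and y: "y \<in> S" for h y
    proof (cases "y \<in> K")
      case True
      have "h * (C - a x0 - e) \<le> h * (\<bar>C - a x0 - e\<bar> + 1)"
        using h by (intro mult_left_mono) auto
      also have "\<dots> \<le> d * (\<bar>C - a x0 - e\<bar> + 1)"
        using h by (intro mult_right_mono) auto
      also have "\<dots> = f x0 - f y0" by (simp add: d_def)
      finally have "h * C + f y0 \<le> f x0 + h * (a x0 + e)" by (simp add: algebra_simps)
      moreover have "h * a y \<le> h * C" using C y h by (intro mult_left_mono) auto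
      moreover have "f y \<le> f y0" using y0(2) True by blast
      ultimately show ?thesis by linarith
    next
      case False
      then have "a y < a x0 + e" using y by (simp add: K_def)
      then have "h * a y \<le> h * (a x0 + e)" using h by (intro mult_left_mono) auto
      with f_max y show ?thesis by fastforce
    qed
    then show ?thesis
      unfolding eventually_at_right_field using \<open>0 < d\<close> by (intro exI[of _ d]) auto
  qed
qed

lemma tendsto_Sup_perturbed_right_slope:
  fixes S :: "'a::t2_space set" and f a :: "'a \<Rightarrow> real"
  assumes S: "compact S" and f: "continuous_on S f" and a: "continuous_on S a"
    and x0: "x0 \<in> S" and f_max: "\<forall>y\<in>S. f y \<le> f x0"
    and a_max: "\<forall>y\<in>S. f y = f x0 \<longrightarrow> a y \<le> a x0"
  shows "((\<lambda>h. (Sup ((\<lambda>y. h * a y + f y) ` S) - f x0) / h) \<longlongrightarrow> a x0) (at_right 0)"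
proof (rule order_tendstoI)
  fix l assume "l < a x0"
  have "l < (Sup ((\<lambda>y. h * a y + f y) ` S) - f x0) / h" if "0 < h" for h
  proof -
    have "bdd_above ((\<lambda>y. h * a y + f y) ` S)"
      using S f a by (intro bounded_imp_bdd_above compact_imp_bounded compact_continuous_image continuous_intros)
    then have "h * a x0 + f x0 \<le> Sup ((\<lambda>y. h * a y + f y) ` S)"
      using x0 by (intro cSup_upper) auto
    moreover have "h * l < h * a x0" using \<open>l < a x0\<close> that by simp
    ultimately have "h * l < Sup ((\<lambda>y. h * a y + f y) ` S) - f x0" by linarith
    with that show ?thesis by (simp add: pos_less_divide_eq mult.commute)
  qed
  then show "\<forall>\<^sub>F h in at_right 0. l < (Sup ((\<lambda>y. h * a y + f y) ` S) - f x0) / h"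
    using eventually_at_right_less[of 0] by (auto elim!: eventually_mono)
next
  fix u assume "a x0 < u"
  define e where "e = (u - a x0) / 2"
  have "0 < e" "a x0 + e < u" using \<open>a x0 < u\<close> by (simp_all add: e_def field_simps)
  have "(Sup ((\<lambda>y. h * a y + f y) ` S) - f x0) / h < u"
    if "0 < h" and "\<forall>y\<in>S. h * a y + f y \<le> f x0 + h * (a x0 + e)" for h
  proof -
    have "Sup ((\<lambda>y. h * a y + f y) ` S) \<le> f x0 + h * (a x0 + e)"
      using that(2) x0 by (intro cSup_least) auto
    moreover have "h * (a x0 + e) < h * u"
      using \<open>a x0 + e < u\<close> that(1) by (rule mult_strict_left_mono)
    ultimately have "Sup ((\<lambda>y. h * a y + f y) ` S) - f x0 < h * u" by linarith
    with that(1) show ?thesis by (simp add: pos_divide_less_eq mult.commute)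
  qed
  then show "\<forall>\<^sub>F h in at_right 0. (Sup ((\<lambda>y. h * a y + f y) ` S) - f x0) / h < u"
    using eventually_conj[OF eventually_at_right_less[of 0]
        eventually_perturbed_le_max[OF S f a x0 f_max a_max \<open>0 < e\<close>]]
    by (auto elim!: eventually_mono)
qed

lemma exists_max_among_maximizers:
  fixes S :: "'a::t2_space set" and f a :: "'a \<Rightarrow> real"
  assumes S: "compact S" "S \<noteq> {}" and f: "continuous_on S f" and a: "continuous_on S a"
  shows "\<exists>x0\<in>S. (\<forall>y\<in>S. f y \<le> f x0) \<and> (\<forall>y\<in>S. f y = f x0 \<longrightarrow> a y \<le> a x0)"
proof -
  obtain xm where xm: "xm \<in> S" "\<forall>y\<in>S. f y \<le> f xm"
    using continuous_attains_sup[OF S f] by blast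
  define K where "K = S \<inter> f -` {f xm}"
  have "closed K"
    unfolding K_def using continuous_closed_preimage[OF f compact_imp_closed[OF S(1)]] by simp
  then have "compact K"
    using compact_Int_closed[OF S(1), of K] by (simp add: K_def Int_assoc)
  moreover have "K \<noteq> {}" using xm by (auto simp: K_def)
  ultimately obtain x0 where "x0 \<in> K" "\<forall>y\<in>K. a y \<le> a x0"
    using continuous_attains_sup continuous_on_subset[OF a] by (metis K_def inf_le1)
  then show ?thesis using xm by (intro bexI[of _ x0]) (auto simp: K_def)
qed

lemma Sup_plus_Sup_dominated_eq:
  fixes u \<phi> :: "'a \<Rightarrow> real" and R :: "'a \<Rightarrow> 'a \<Rightarrow> bool"
  assumes S: "S \<noteq> {}" and bdd: "bdd_above ((\<lambda>y. u y + \<phi> y) ` S)"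
    and refl: "\<forall>x\<in>S. R x x" and mono: "\<forall>x\<in>S. \<forall>y\<in>S. R y x \<longrightarrow> u x \<le> u y"
  shows "Sup ((\<lambda>x. u x + Sup (\<phi> ` {y\<in>S. R y x})) ` S) = Sup ((\<lambda>y. u y + \<phi> y) ` S)"
proof -
  define T where "T = Sup ((\<lambda>y. u y + \<phi> y) ` S)"
  have bound: "\<phi> y \<le> T - u x" if "x \<in> S" "y \<in> S" "R y x" for x y
  proof -
    have "u y + \<phi> y \<le> T" unfolding T_def using bdd that(2) by (intro cSup_upper) auto
    with mono that show ?thesis by fastforce
  qed
  have inner_le: "Sup (\<phi> ` {y\<in>S. R y x}) \<le> T - u x" if "x \<in> S" for x
    using that refl bound by (intro cSup_least) auto
  have inner_ge: "\<phi> x \<le> Sup (\<phi> ` {y\<in>S. R y x})" if "x \<in> S" for x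
    using that refl bound by (intro cSup_upper bdd_aboveI[of _ "T - u x"]) auto
  have bdd_lhs: "bdd_above ((\<lambda>x. u x + Sup (\<phi> ` {y\<in>S. R y x})) ` S)"
    using inner_le by (intro bdd_aboveI[of _ T]) force
  show ?thesis
  proof (rule antisym)
    show "Sup ((\<lambda>x. u x + Sup (\<phi> ` {y\<in>S. R y x})) ` S) \<le> Sup ((\<lambda>y. u y + \<phi> y) ` S)"
      using S inner_le unfolding T_def by (intro cSup_least) force+
    show "Sup ((\<lambda>y. u y + \<phi> y) ` S) \<le> Sup ((\<lambda>x. u x + Sup (\<phi> ` {y\<in>S. R y x})) ` S)"
      using S inner_ge by (intro cSup_least) (force intro: cSup_upper2[OF _ _ bdd_lhs])+
  qed
qed

lemma continuous_on_coordinate [continuous_intros]: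
  "continuous_on S (\<lambda>x::'a \<Rightarrow> 'b::topological_space. x i)"
  by (rule continuous_on_subset[OF continuous_on_product_coordinates]) simp

lemma Simp_nonneg: "x \<in> Simp \<theta> \<Longrightarrow> 0 \<le> x i"
  by (cases "i \<in> {1..\<theta>}") (auto simp: Simp_def)

lemma Simp_nonempty: "1 \<le> \<theta> \<Longrightarrow> Simp \<theta> \<noteq> {}"
proof -
  assume "1 \<le> \<theta>"
  then have "(\<lambda>i. if i \<in> {1..\<theta>} then 1 / real \<theta> else 0) \<in> Simp \<theta>"
    by (auto simp: Simp_def)
  then show ?thesis by blast
qed

lemma compact_Simp: "compact (Simp \<theta>)"
proof -
  define B where "B i = (if i \<in> {1..\<theta>} then {0..1::real} else {0})" for i :: nat
  have "compactin (product_topology (\<lambda>i. euclidean) UNIV) (PiE UNIV B)"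
    unfolding compactin_PiE by (auto simp: B_def)
  then have "compact (PiE UNIV B)"
    by (simp add: euclidean_product_topology)
  moreover have "closed {x::nat\<Rightarrow>real. \<forall>i. i \<in> {1..<\<theta>} \<longrightarrow> x (i+1) \<le> x i}"
  proof (intro closed_Collect_all)
    fix i show "closed {x::nat\<Rightarrow>real. i \<in> {1..<\<theta>} \<longrightarrow> x (i+1) \<le> x i}"
      by (cases "i \<in> {1..<\<theta>}") (auto intro!: closed_Collect_le continuous_on_product_coordinates)
  qed
  moreover have "closed {x::nat\<Rightarrow>real. (\<Sum>i=1..\<theta>. x i) = 1}"
    by (intro closed_Collect_eq continuous_intros continuous_on_product_coordinates)
  moreover have "Simp \<theta> = PiE UNIV B \<inter> ({x. \<forall>i. i \<in> {1..<\<theta>} \<longrightarrow> x (i+1) \<le> x i}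
      \<inter> {x. (\<Sum>i=1..\<theta>. x i) = 1})"
    by (auto simp: Simp_def B_def PiE_UNIV_domain split: if_splits)
  ultimately show ?thesis by (simp add: closed_Int compact_Int_closed)
qed

lemma continuous_on_phi: "continuous_on (Simp \<theta>) (phi \<theta> \<beta>)"
proof -
  note coord = continuous_on_coordinate[where S = "Simp \<theta>"]
  have "continuous_on (Simp \<theta>) (\<lambda>x. x i * ln (x i))" for i
    using Simp_nonneg by (intro continuous_on_compose2[OF continuous_on_x_ln_x coord]) auto
  with coord show ?thesis
    unfolding phi_def by (intro continuous_on_diff continuous_on_mult_left continuous_on_sum
        continuous_on_power continuous_on_const) auto
qed

lemma majorizes_first: "majorizes \<theta> y x \<Longrightarrow> 1 \<le> \<theta> \<Longrightarrow> x 1 \<le> y 1"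
  by (auto simp: majorizes_def dest: bspec[of _ _ 1])

lemma majorizes_last:
  assumes "majorizes \<theta> y x" "x \<in> Simp \<theta>" "y \<in> Simp \<theta>" "2 \<le> \<theta>"
  shows "y \<theta> \<le> x \<theta>"
proof -
  have split_last: "(\<Sum>j=1..\<theta>. v j) = (\<Sum>j=1..\<theta>-1. v j) + v \<theta>" for v :: "nat \<Rightarrow> real"
    using \<open>2 \<le> \<theta>\<close> by (cases \<theta>) (auto simp: add.commute)
  have "(\<Sum>j=1..\<theta>-1. x j) \<le> (\<Sum>j=1..\<theta>-1. y j)"
    using assms(1,4) unfolding majorizes_def by auto
  moreover have "(\<Sum>j=1..\<theta>. x j) = 1" "(\<Sum>j=1..\<theta>. y j) = 1"
    using assms(2,3) by (auto simp: Simp_def)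
  ultimately show ?thesis using split_last[of x] split_last[of y] by linarith
qed

lemma bdd_above_plus_phi:
  "continuous_on (Simp \<theta>) u \<Longrightarrow> bdd_above ((\<lambda>y. u y + phi \<theta> \<beta> y) ` Simp \<theta>)"
  by (intro bounded_imp_bdd_above compact_imp_bounded compact_continuous_image compact_Simp
      continuous_on_add continuous_on_phi)

lemma zf_eq_Sup_nonneg:
  assumes "1 \<le> \<theta>" "0 \<le> h"
  shows "zf \<theta> \<beta> h = Sup ((\<lambda>y. h * (y 1 - 1 / real \<theta>) + phi \<theta> \<beta> y) ` Simp \<theta>)"
proof -
  have "zf \<theta> \<beta> h = Sup ((\<lambda>x. h * (x 1 - 1 / real \<theta>) + g \<theta> \<beta> x) ` Simp \<theta>)"
    using assms(2) by (simp add: zf_def)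
  also have "\<dots> = Sup ((\<lambda>y. h * (y 1 - 1 / real \<theta>) + phi \<theta> \<beta> y) ` Simp \<theta>)"
    unfolding g_def
  proof (rule Sup_plus_Sup_dominated_eq)
    show "\<forall>x\<in>Simp \<theta>. \<forall>y\<in>Simp \<theta>. majorizes \<theta> y x \<longrightarrow> h * (x 1 - 1 / real \<theta>) \<le> h * (y 1 - 1 / real \<theta>)"
      using assms majorizes_first by (auto intro: mult_left_mono)
  next
    show "bdd_above ((\<lambda>y. h * (y 1 - 1 / real \<theta>) + phi \<theta> \<beta> y) ` Simp \<theta>)"
      by (intro bdd_above_plus_phi continuous_intros)
  qed (use assms Simp_nonempty in \<open>auto simp: majorizes_def\<close>)
  finally show ?thesis .
qed

lemma zf_eq_Sup_neg:
  assumes "2 \<le> \<theta>" "h < 0"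
  shows "zf \<theta> \<beta> h = Sup ((\<lambda>y. h * (y \<theta> - 1 / real \<theta>) + phi \<theta> \<beta> y) ` Simp \<theta>)"
proof -
  have "zf \<theta> \<beta> h = Sup ((\<lambda>x. h * (x \<theta> - 1 / real \<theta>) + g \<theta> \<beta> x) ` Simp \<theta>)"
    using assms(2) by (simp add: zf_def)
  also have "\<dots> = Sup ((\<lambda>y. h * (y \<theta> - 1 / real \<theta>) + phi \<theta> \<beta> y) ` Simp \<theta>)"
    unfolding g_def
  proof (rule Sup_plus_Sup_dominated_eq)
    show "\<forall>x\<in>Simp \<theta>. \<forall>y\<in>Simp \<theta>. majorizes \<theta> y x \<longrightarrow> h * (x \<theta> - 1 / real \<theta>) \<le> h * (y \<theta> - 1 / real \<theta>)"
      using assms majorizes_last by (auto intro: mult_left_mono_neg)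
  next
    show "bdd_above ((\<lambda>y. h * (y \<theta> - 1 / real \<theta>) + phi \<theta> \<beta> y) ` Simp \<theta>)"
      by (intro bdd_above_plus_phi continuous_intros)
  qed (use assms Simp_nonempty in \<open>auto simp: majorizes_def\<close>)
  finally show ?thesis .
qed

lemma is_phi_max_iff_eq:
  "is_phi_max \<theta> \<beta> x \<Longrightarrow> is_phi_max \<theta> \<beta> y \<longleftrightarrow> y \<in> Simp \<theta> \<and> phi \<theta> \<beta> y = phi \<theta> \<beta> x"
  unfolding is_phi_max_def by (auto intro: antisym)

lemma zf_zero:
  assumes "1 \<le> \<theta>" "is_phi_max \<theta> \<beta> x"
  shows "zf \<theta> \<beta> 0 = phi \<theta> \<beta> x"
proof -
  have "zf \<theta> \<beta> 0 = Sup (phi \<theta> \<beta> ` Simp \<theta>)"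
    using zf_eq_Sup_nonneg[OF assms(1)] by simp
  also have "\<dots> = phi \<theta> \<beta> x"
    using assms(2) by (intro cSup_eq_maximum) (auto simp: is_phi_max_def)
  finally show ?thesis .
qed

lemma exists_x_up: "1 \<le> \<theta> \<Longrightarrow> \<exists>x. is_x_up \<theta> \<beta> x"
proof -
  assume "1 \<le> \<theta>"
  have "continuous_on (Simp \<theta>) (\<lambda>x. x 1)" by (intro continuous_intros)
  from exists_max_among_maximizers[OF compact_Simp Simp_nonempty[OF \<open>1 \<le> \<theta>\<close>] continuous_on_phi this]
  show ?thesis
    unfolding is_x_up_def by (metis is_phi_max_def is_phi_max_iff_eq)
qed

lemma exists_x_down: "1 \<le> \<theta> \<Longrightarrow> \<exists>x. is_x_down \<theta> \<beta> x"
proof -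
  assume "1 \<le> \<theta>"
  have "continuous_on (Simp \<theta>) (\<lambda>x. - x \<theta>)" by (intro continuous_intros)
  from exists_max_among_maximizers[OF compact_Simp Simp_nonempty[OF \<open>1 \<le> \<theta>\<close>] continuous_on_phi this]
  show ?thesis
    unfolding is_x_down_def by (metis is_phi_max_def is_phi_max_iff_eq neg_le_iff_le)
qed

lemma zf_right_slope:
  assumes "1 \<le> \<theta>" "is_x_up \<theta> \<beta> x"
  shows "((\<lambda>h. (zf \<theta> \<beta> h - zf \<theta> \<beta> 0) / h) \<longlongrightarrow> x 1 - 1 / real \<theta>) (at_right 0)"
proof -
  have x: "is_phi_max \<theta> \<beta> x" "x \<in> Simp \<theta>" "\<forall>y\<in>Simp \<theta>. phi \<theta> \<beta> y \<le> phi \<theta> \<beta> x"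
    using assms(2) by (auto simp: is_x_up_def is_phi_max_def)
  have "\<forall>y\<in>Simp \<theta>. phi \<theta> \<beta> y = phi \<theta> \<beta> x \<longrightarrow> y 1 - 1 / real \<theta> \<le> x 1 - 1 / real \<theta>"
    using assms(2) is_phi_max_iff_eq[OF x(1)] by (auto simp: is_x_up_def)
  then have "((\<lambda>h. (Sup ((\<lambda>y. h * (y 1 - 1 / real \<theta>) + phi \<theta> \<beta> y) ` Simp \<theta>) - phi \<theta> \<beta> x) / h)
      \<longlongrightarrow> x 1 - 1 / real \<theta>) (at_right 0)"
    by (intro tendsto_Sup_perturbed_right_slope compact_Simp continuous_on_phi continuous_intros x)
  moreover have "\<forall>\<^sub>F h in at_right 0.
      (Sup ((\<lambda>y. h * (y 1 - 1 / real \<theta>) + phi \<theta> \<beta> y) ` Simp \<theta>) - phi \<theta> \<beta> x) / h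
      = (zf \<theta> \<beta> h - zf \<theta> \<beta> 0) / h"
    using eventually_at_right_less[of 0]
    by eventually_elim (simp add: zf_eq_Sup_nonneg[OF assms(1)] zf_zero[OF assms(1) x(1)])
  ultimately show ?thesis by (rule Lim_transform_eventually)
qed

lemma zf_left_slope:
  assumes "2 \<le> \<theta>" "is_x_down \<theta> \<beta> x"
  shows "((\<lambda>h. (zf \<theta> \<beta> h - zf \<theta> \<beta> 0) / h) \<longlongrightarrow> x \<theta> - 1 / real \<theta>) (at_left 0)"
proof -
  have x: "is_phi_max \<theta> \<beta> x" "x \<in> Simp \<theta>" "\<forall>y\<in>Simp \<theta>. phi \<theta> \<beta> y \<le> phi \<theta> \<beta> x"
    using assms(2) by (auto simp: is_x_down_def is_phi_max_def)
  have "\<forall>y\<in>Simp \<theta>. phi \<theta> \<beta> y = phi \<theta> \<beta> x \<longrightarrow> 1 / real \<theta> - y \<theta> \<le> 1 / real \<theta> - x \<theta>"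
    using assms(2) is_phi_max_iff_eq[OF x(1)] by (auto simp: is_x_down_def)
  then have "((\<lambda>k. (Sup ((\<lambda>y. k * (1 / real \<theta> - y \<theta>) + phi \<theta> \<beta> y) ` Simp \<theta>) - phi \<theta> \<beta> x) / k)
      \<longlongrightarrow> 1 / real \<theta> - x \<theta>) (at_right 0)"
    by (intro tendsto_Sup_perturbed_right_slope compact_Simp continuous_on_phi continuous_intros x)
  then have "((\<lambda>k. - ((Sup ((\<lambda>y. k * (1 / real \<theta> - y \<theta>) + phi \<theta> \<beta> y) ` Simp \<theta>) - phi \<theta> \<beta> x) / k))
      \<longlongrightarrow> x \<theta> - 1 / real \<theta>) (at_right 0)"
    by (auto dest: tendsto_minus)
  moreover have "\<forall>\<^sub>F k in at_right 0.
      - ((Sup ((\<lambda>y. k * (1 / real \<theta> - y \<theta>) + phi \<theta> \<beta> y) ` Simp \<theta>) - phi \<theta> \<beta> x) / k)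
      = (zf \<theta> \<beta> (- k) - zf \<theta> \<beta> 0) / (- k)"
    using eventually_at_right_less[of 0] zf_zero[OF _ x(1)] assms(1)
    by (auto simp: zf_eq_Sup_neg[OF assms(1)] algebra_simps elim!: eventually_mono)
  ultimately have "((\<lambda>k. (zf \<theta> \<beta> (- k) - zf \<theta> \<beta> 0) / (- k)) \<longlongrightarrow> x \<theta> - 1 / real \<theta>) (at_right 0)"
    by (rule Lim_transform_eventually)
  then show ?thesis by (simp add: filterlim_at_left_to_right)
qed

theorem theorem4p1:
  fixes \<theta> :: nat and \<beta> :: real
  assumes "2 \<le> \<theta>" and "0 < \<beta>"
  shows "(\<exists>x. is_x_up \<theta> \<beta> x) \<and> (\<exists>x. is_x_down \<theta> \<beta> x)
    \<and> (\<forall>x. is_x_up \<theta> \<beta> x \<longrightarrow>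
          ((\<lambda>h. (zf \<theta> \<beta> h - zf \<theta> \<beta> 0) / h) \<longlongrightarrow> x 1 - 1 / real \<theta>) (at_right 0))
    \<and> (\<forall>x. is_x_down \<theta> \<beta> x \<longrightarrow>
          ((\<lambda>h. (zf \<theta> \<beta> h - zf \<theta> \<beta> 0) / h) \<longlongrightarrow> x \<theta> - 1 / real \<theta>) (at_left 0))"
  using assms(1) exists_x_up exists_x_down zf_right_slope zf_left_slope by simp

end
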